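(* Let $f_0(1)=0$ and $f_0(n)=1$ for $n\ge2$, and let $m\ge1$. For $n>3$ and $1\le k\le\lfloor n/2\rfloor$, $c_m(n,k)$ equals the number of words of length $n-3$ over the alphabet $\{0,1,\ldots,m\}$ with exactly $k-1$ letters equal to $1$ and in which all nonzero letters are isolated (no two nonzero letters are adjacent). Moreover, for $1\le k\le\lfloor n/2\rfloor$, \[c_m(n,k)=\sum_{j=0}^{\lfloor\frac{n}{2}\rfloor-k}(m-1)^{j}\binom{j+k-1}{k-1}\binom{n-k-j-1}{k+j-1},\] and $c_m(n,k)=0$ when $\lfloor n/2\rfloor<k\le n$.
   Context: For $m\ge 1$, $f_m$ is the invert transform of $f_{m-1}$, i.e. $f_m(n)=f_{m-1}(n)+\sum_{i=1}^{n-1}f_{m-1}(i)f_m(n-i)$ for $n\ge1$. For $m\ge1$ the numbers $c_m(n,k)$, $0\le k\le n$, are defined by $c_m(0,0)=1$, $c_m(n,0)=0$ for $n\ge1$, and $c_m(n,k)=\sum_{i=1}^{n-k+1}f_{m-1}(i)\,c_m(n-i,k-1)$ for $1\le k\le n$. The convention $0^0=1$ is used. *)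

theory Defs
  imports Main
begin

text \<open>Invert transform of a sequence g (indexed from 1):
  inv_tr g n = g n + (\<Sum>i=1..n-1. g i * inv_tr g (n-i)) for n \<ge> 1; value at 0 is irrelevant (set to 0).\<close>
function inv_tr :: "(nat \<Rightarrow> nat) \<Rightarrow> nat \<Rightarrow> nat" where
  "inv_tr g n = (if n = 0 then 0 else g n + (\<Sum>i\<in>{1..n-1}. g i * inv_tr g (n - i)))"
  by auto
termination
  by (relation "measure (\<lambda>(g, n). n)") auto

definition f0 :: "nat \<Rightarrow> nat" where
  "f0 n = (if n \<le> 1 then 0 else 1)"

fun f :: "nat \<Rightarrow> nat \<Rightarrow> nat" where
  "f 0 = f0"
| "f (Suc m) = inv_tr (f m)"

text \<open>The triangle attached to a sequence g: cc g 0 0 = 1, cc g n 0 = 0 (n \<ge> 1),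
  cc g n k = \<Sum>i=1..n-k+1. g i * cc g (n-i) (k-1) for 1 \<le> k \<le> n
  (and 0 for k > n, a range not covered by the paper's definition).\<close>
fun cc :: "(nat \<Rightarrow> nat) \<Rightarrow> nat \<Rightarrow> nat \<Rightarrow> nat" where
  "cc g n 0 = (if n = 0 then 1 else 0)"
| "cc g n (Suc k) = (if Suc k \<le> n then (\<Sum>i\<in>{1..n - Suc k + 1}. g i * cc g (n - i) k) else 0)"

definition c :: "nat \<Rightarrow> nat \<Rightarrow> nat \<Rightarrow> nat" where
  "c m n k = cc (f (m - 1)) n k"

definition words :: "nat \<Rightarrow> nat \<Rightarrow> nat \<Rightarrow> nat list set" where
  "words m L j = {w. length w = L \<and> set w \<subseteq> {0..m} \<and> count_list w 1 = j \<and>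
      (\<forall>i. Suc i < length w \<longrightarrow> w ! i = 0 \<or> w ! Suc i = 0)}"

end

theory Submission
  imports Defs "HOL-Computational_Algebra.Formal_Power_Series"
begin

text \<open>
  Writing \<open>H\<^sub>a\<close> for the generating function of \<open>f\<^sub>a\<close>, the invert transform
  gives \<open>H\<^sub>a\<^sub>+\<^sub>1 (1 - H\<^sub>a) = H\<^sub>a\<close>, and induction on \<open>a\<close> yields
  \<open>H\<^sub>a (1 - x - a x\<^sup>2) = x\<^sup>2\<close>. The triangle built from \<open>f\<^sub>a\<close> has column generating
  functions \<open>H\<^sub>a\<^sup>k\<close>, so multiplying by \<open>1 - x - a x\<^sup>2\<close> gives the recurrence
  \<open>c(n+2,k+1) = c(n+1,k+1) + a c(n,k+1) + c(n,k)\<close>.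
  The binomial sum satisfies the same recurrence by Pascal's rule, and so do the
  word counts, by classifying words according to their first letter; the initial values agree.
\<close>

unbundle fps_syntax

declare inv_tr.simps [simp del] cc.simps(2) [simp del]

lemma inv_tr_0 [simp]: "inv_tr g 0 = 0"
  by (simp add: inv_tr.simps)

lemma f_0 [simp]: "f a 0 = 0"
  by (cases a) (simp_all add: f0_def)

lemma f_1 [simp]: "f a (Suc 0) = 0"
  by (induction a) (simp_all add: f0_def inv_tr.simps)

definition ogf :: "(nat \<Rightarrow> nat) \<Rightarrow> int fps" where
  "ogf g = Abs_fps (\<lambda>n. int (g n))"

lemma ogf_nth [simp]: "ogf g $ n = int (g n)"
  by (simp add: ogf_def)

lemma cc_eq_0_if_less: "n < k \<Longrightarrow> cc g n k = 0"
  by (cases k) (auto simp: cc.simps(2))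

lemma cc_Suc_convolution:
  assumes "g 0 = 0"
  shows "cc g n (Suc k) = (\<Sum>i=0..n. g i * cc g (n - i) k)"
proof -
  have vanish: "g i * cc g (n - i) k = 0" if "i = 0 \<or> n - i < k" for i
    using that assms by (auto simp: cc_eq_0_if_less)
  show ?thesis
  proof (cases "Suc k \<le> n")
    case True
    have "(\<Sum>i=0..n. g i * cc g (n - i) k) = (\<Sum>i=1..n - Suc k + 1. g i * cc g (n - i) k)"
    proof (rule sum.mono_neutral_right)
      show "\<forall>i\<in>{0..n} - {1..n - Suc k + 1}. g i * cc g (n - i) k = 0"
        by (intro ballI vanish) auto
    qed (use True in auto)
    with True show ?thesis by (simp add: cc.simps(2))
  next
    case False
    then have "(\<Sum>i=0..n. g i * cc g (n - i) k) = 0"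
      by (intro sum.neutral ballI vanish) auto
    with False show ?thesis by (simp add: cc.simps(2))
  qed
qed

lemma ogf_cc: "g 0 = 0 \<Longrightarrow> ogf (\<lambda>n. cc g n k) = ogf g ^ k"
proof (induction k)
  case 0
  show ?case by (simp add: fps_eq_iff)
next
  case (Suc k)
  have "ogf (\<lambda>n. cc g n (Suc k)) = ogf g * ogf (\<lambda>n. cc g n k)"
    by (rule fps_ext) (simp add: fps_mult_nth cc_Suc_convolution[where g = g, OF Suc.prems])
  with Suc show ?case by simp
qed

lemma ogf_inv_tr:
  assumes "g 0 = 0"
  shows "ogf (inv_tr g) = ogf g + ogf g * ogf (inv_tr g)"
proof (rule fps_ext)
  fix n
  show "ogf (inv_tr g) $ n = (ogf g + ogf g * ogf (inv_tr g)) $ n"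
  proof (cases n)
    case (Suc p)
    have "(\<Sum>i=0..Suc p. int (g i) * int (inv_tr g (Suc p - i))) = (\<Sum>i=1..p. int (g i) * int (inv_tr g (Suc p - i)))"
      using assms by (simp add: sum.atLeast_Suc_atMost)
    moreover have "int (inv_tr g (Suc p)) = int (g (Suc p)) + (\<Sum>i=1..p. int (g i) * int (inv_tr g (Suc p - i)))"
      by (simp add: inv_tr.simps[of g "Suc p"])
    ultimately show ?thesis
      using Suc by (simp add: fps_mult_nth)
  qed (simp add: assms)
qed

lemma ogf_f: "ogf (f a) * (1 - fps_X - of_nat a * fps_X ^ 2) = fps_X ^ 2"
proof (induction a)
  case 0
  have "ogf f0 = ogf f0 * fps_X + fps_X ^ 2"
    by (rule fps_ext) (auto simp: f0_def)
  then show ?case by (simp add: algebra_simps)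
next
  case (Suc a)
  let ?H = "ogf (f a)" and ?H' = "ogf (f (Suc a))"
  have "?H' * (1 - ?H) = ?H"
    using ogf_inv_tr[of "f a"] by (simp add: algebra_simps)
  moreover have "(1 - ?H) * (1 - fps_X - of_nat a * fps_X ^ 2) = 1 - fps_X - of_nat (Suc a) * fps_X ^ 2"
    using Suc.IH by (simp add: algebra_simps)
  ultimately have "?H' * (1 - fps_X - of_nat (Suc a) * fps_X ^ 2) = ?H * (1 - fps_X - of_nat a * fps_X ^ 2)"
    by (metis mult.assoc)
  with Suc.IH show ?case by simp
qed

lemma cc_f_rec:
  "cc (f a) (n + 2) (Suc k) = cc (f a) (n + 1) (Suc k) + a * cc (f a) n (Suc k) + cc (f a) n k"
proof -
  let ?C = "\<lambda>k. ogf (\<lambda>n. cc (f a) n k)"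
  have "?C (Suc k) * (1 - fps_X - of_nat a * fps_X ^ 2) = ?C k * fps_X ^ 2"
    by (simp add: ogf_cc ogf_f flip: mult.assoc)
  then have "?C (Suc k) = fps_X * ?C (Suc k) + fps_const (int a) * (fps_X ^ 2 * ?C (Suc k)) + fps_X ^ 2 * ?C k"
    by (simp add: fps_of_nat right_diff_distrib algebra_simps)
  then have "?C (Suc k) $ (n + 2) = (fps_X * ?C (Suc k) + fps_const (int a) * (fps_X ^ 2 * ?C (Suc k)) + fps_X ^ 2 * ?C k) $ (n + 2)"
    by (rule arg_cong)
  then have "int (cc (f a) (n + 2) (Suc k)) = int (cc (f a) (n + 1) (Suc k) + a * cc (f a) n (Suc k) + cc (f a) n k)"
    by (simp add: fps_X_power_mult_nth)
  then show ?thesis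
    by (simp only: of_nat_eq_iff)
qed

lemma cc_f_1 [simp]: "cc (f a) (Suc 0) k = 0"
  by (cases k) (simp_all add: cc.simps(2))

lemma cc_f_eq_0: "n < 2 * k \<Longrightarrow> cc (f a) n k = 0"
proof (induction n arbitrary: k rule: induct_nat_012)
  case 0
  then show ?case by (cases k) (simp_all add: cc.simps(2))
next
  case 1
  then show ?case by simp
next
  case (ge2 n)
  then obtain k' where k: "k = Suc k'"
    by (cases k) auto
  have "cc (f a) (n + 2) (Suc k') = cc (f a) (n + 1) (Suc k') + a * cc (f a) n (Suc k') + cc (f a) n k'"
    by (rule cc_f_rec)
  with ge2 k show ?case
    by simp
qed

lemma cc_f_diagonal: "cc (f a) (2 * p) p = 1"
proof (induction p)
  case (Suc p)
  have "cc (f a) (2 * p + 2) (Suc p) = cc (f a) (2 * p + 1) (Suc p) + a * cc (f a) (2 * p) (Suc p) + cc (f a) (2 * p) p"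
    by (rule cc_f_rec)
  with Suc show ?case
    by (simp add: cc_f_eq_0)
qed simp

lemma cc_f_subdiagonal: "cc (f a) (2 * p + 1) p = p"
proof (induction p)
  case (Suc p)
  have "cc (f a) (2 * p + 1 + 2) (Suc p) = cc (f a) (2 * p + 1 + 1) (Suc p) + a * cc (f a) (2 * p + 1) (Suc p) + cc (f a) (2 * p + 1) p"
    by (rule cc_f_rec)
  with Suc show ?case
    using cc_f_diagonal[of a "Suc p"] by (simp add: cc_f_eq_0)
qed simp

text \<open>\<open>closed_form a p r\<close> is the binomial sum of the theorem for \<open>k = p + 1\<close> and
  \<open>n = 2 p + 2 + r\<close>, with \<open>a = m - 1\<close>.\<close>

definition closed_form_term :: "nat \<Rightarrow> nat \<Rightarrow> nat \<Rightarrow> nat \<Rightarrow> nat" where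
  "closed_form_term a p r j = a ^ j * ((p + j) choose p) * ((p + r - j) choose (p + j))"

definition closed_form :: "nat \<Rightarrow> nat \<Rightarrow> nat \<Rightarrow> nat" where
  "closed_form a p r = (\<Sum>j=0..r div 2. closed_form_term a p r j)"

lemma closed_form_term_eq_0:
  assumes "r < 2 * j"
  shows "closed_form_term a p r j = 0"
proof -
  have "p + r - j < p + j"
    using assms by linarith
  then show ?thesis
    by (simp add: closed_form_term_def)
qed

lemma closed_form_eq_sum:
  assumes "r div 2 \<le> N"
  shows "closed_form a p r = (\<Sum>j=0..N. closed_form_term a p r j)"
  unfolding closed_form_def
proof (rule sum.mono_neutral_left)
  show "\<forall>j\<in>{0..N} - {0..r div 2}. closed_form_term a p r j = 0"
    by (auto intro: closed_form_term_eq_0)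
qed (use assms in auto)

lemma closed_form_0 [simp]: "closed_form a p 0 = 1"
  and closed_form_1 [simp]: "closed_form a p (Suc 0) = Suc p"
  by (simp_all add: closed_form_def closed_form_term_def)

lemma closed_form_term_rec:
  "closed_form_term a p (r + 2) j = closed_form_term a p (r + 1) j
     + (case p of 0 \<Rightarrow> 0 | Suc q \<Rightarrow> closed_form_term a q (r + 2) j)
     + (case j of 0 \<Rightarrow> 0 | Suc i \<Rightarrow> a * closed_form_term a p r i)"
proof (cases j)
  case 0
  show ?thesis
  proof (cases p)
    case (Suc q)
    have "(Suc (q + r + 2) choose Suc q) = (q + r + 2 choose q) + (q + r + 2 choose Suc q)"
      by (rule binomial_Suc_Suc)
    then show ?thesis
      using 0 Suc by (simp add: closed_form_term_def)
  qed (simp add: 0 closed_form_term_def)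
next
  case (Suc i)
  show ?thesis
  proof (cases "i \<le> r")
    case True
    then obtain t where r: "r = i + t"
      using le_Suc_ex by blast
    show ?thesis
    proof (cases p)
      case 0
      have "(Suc t choose Suc i) = (t choose i) + (t choose Suc i)"
        by (rule binomial_Suc_Suc)
      then show ?thesis
        using 0 Suc r by (simp add: closed_form_term_def algebra_simps)
    next
      case (Suc q)
      define A B Y Y' where "A = q + i + 1 choose q" and "B = q + i + 1 choose Suc q"
        and "Y = q + t + 1 choose (q + i + 1)" and "Y' = q + t + 1 choose (q + i + 2)"
      have pascal_A: "(q + i + 2 choose Suc q) = A + B"
        using binomial_Suc_Suc[of "q + i + 1" q] by (simp add: A_def B_def)
      have pascal_Y: "(q + t + 2 choose (q + i + 2)) = Y + Y'"
        using binomial_Suc_Suc[of "q + t + 1" "q + i + 1"] by (simp add: Y_def Y'_def)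
      have "closed_form_term a p (r + 2) j = a ^ Suc i * (A + B) * (Y + Y')"
        using pascal_A pascal_Y by (simp add: closed_form_term_def r Suc \<open>j = Suc i\<close>)
      moreover have "closed_form_term a p (r + 1) j = a ^ Suc i * (A + B) * Y'"
        using pascal_A by (simp add: closed_form_term_def r Suc \<open>j = Suc i\<close> Y'_def)
      moreover have "closed_form_term a q (r + 2) j = a ^ Suc i * A * Y"
        by (simp add: closed_form_term_def r \<open>j = Suc i\<close> A_def Y_def)
      moreover have "closed_form_term a p r i = a ^ i * B * Y"
        by (simp add: closed_form_term_def r Suc B_def Y_def)
      ultimately show ?thesis
        using \<open>j = Suc i\<close> Suc by (simp add: algebra_simps)
    qed
  next
    case False
    then show ?thesis
      using Suc by (cases p) (simp_all add: closed_form_term_eq_0)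
  qed
qed

lemma closed_form_rec:
  "closed_form a p (r + 2) = closed_form a p (r + 1) + a * closed_form a p r
     + (case p of 0 \<Rightarrow> 0 | Suc q \<Rightarrow> closed_form a q (r + 2))"
proof -
  let ?T = "closed_form_term a"
  have extend: "closed_form a p' r' = (\<Sum>j=0..r+2. ?T p' r' j)" if "r' \<le> r + 2" for p' r'
    by (rule closed_form_eq_sum) (use that in linarith)
  have shift: "(\<Sum>j=0..r+2. case j of 0 \<Rightarrow> 0 | Suc i \<Rightarrow> a * ?T p r i) = a * closed_form a p r"
  proof -
    have "(\<Sum>j=0..Suc (r+1). case j of 0 \<Rightarrow> 0 | Suc i \<Rightarrow> a * ?T p r i) = (\<Sum>i=0..r+1. a * ?T p r i)"
      by (simp only: sum.atLeast0_atMost_Suc_shift nat.case add_0_left o_def)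
    also have "\<dots> = a * (\<Sum>i=0..r+1. ?T p r i)"
      by (rule sum_distrib_left[symmetric])
    also have "(\<Sum>i=0..r+1. ?T p r i) = closed_form a p r"
      by (rule closed_form_eq_sum[symmetric]) simp
    finally show ?thesis
      by simp
  qed
  have lower: "(\<Sum>j=0..r+2. case p of 0 \<Rightarrow> 0 | Suc q \<Rightarrow> ?T q (r + 2) j)
      = (case p of 0 \<Rightarrow> 0 | Suc q \<Rightarrow> closed_form a q (r + 2))"
    by (cases p) (simp_all only: nat.case sum.neutral_const extend[symmetric] order_refl)
  have "closed_form a p (r + 2) = (\<Sum>j=0..r+2. ?T p (r + 2) j)"
    by (rule extend[OF order_refl])
  also have "\<dots> = (\<Sum>j=0..r+2. ?T p (r + 1) j) + (\<Sum>j=0..r+2. case p of 0 \<Rightarrow> 0 | Suc q \<Rightarrow> ?T q (r + 2) j)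
      + (\<Sum>j=0..r+2. case j of 0 \<Rightarrow> 0 | Suc i \<Rightarrow> a * ?T p r i)"
    by (simp only: closed_form_term_rec[of a p r] sum.distrib)
  also have "(\<Sum>j=0..r+2. ?T p (r + 1) j) = closed_form a p (r + 1)"
    by (rule extend[symmetric]) simp
  finally show ?thesis
    unfolding shift lower by linarith
qed

lemma diagonal_rec_unique:
  fixes D E :: "nat \<Rightarrow> nat \<Rightarrow> nat"
  assumes "\<And>p. D p 0 = E p 0" and "\<And>p. D p 1 = E p 1"
    and "\<And>p r. D p (r + 2) = D p (r + 1) + a * D p r + (case p of 0 \<Rightarrow> 0 | Suc q \<Rightarrow> D q (r + 2))"
    and "\<And>p r. E p (r + 2) = E p (r + 1) + a * E p r + (case p of 0 \<Rightarrow> 0 | Suc q \<Rightarrow> E q (r + 2))"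
  shows "D p r = E p r"
proof (induction p arbitrary: r)
  case 0
  show ?case
    by (induction r rule: induct_nat_012) (simp_all add: assms(1) assms(2)[simplified] assms(3,4)[of 0, simplified])
next
  case (Suc q)
  show ?case
    by (induction r rule: induct_nat_012) (simp_all add: assms(1) assms(2)[simplified] assms(3,4)[of "Suc q", simplified] Suc.IH)
qed

lemma cc_f_closed_form: "cc (f a) (2 * p + 2 + r) (Suc p) = closed_form a p r"
proof (rule diagonal_rec_unique[where a = a and D = "\<lambda>p r. cc (f a) (2 * p + 2 + r) (Suc p)" and E = "closed_form a"])
  show "cc (f a) (2 * p + 2 + 0) (Suc p) = closed_form a p 0" for p
    using cc_f_diagonal[of a "Suc p"] by simp
  show "cc (f a) (2 * p + 2 + 1) (Suc p) = closed_form a p 1" for p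
    using cc_f_subdiagonal[of a "Suc p"] by simp
  show "cc (f a) (2 * p + 2 + (r + 2)) (Suc p) = cc (f a) (2 * p + 2 + (r + 1)) (Suc p)
      + a * cc (f a) (2 * p + 2 + r) (Suc p) + (case p of 0 \<Rightarrow> 0 | Suc q \<Rightarrow> cc (f a) (2 * q + 2 + (r + 2)) (Suc q))" for p r
    using cc_f_rec[of a "2 * p + 2 + r" p] by (cases p) (simp_all add: algebra_simps)
qed (rule closed_form_rec)

definition nonzero_isolated :: "nat list \<Rightarrow> bool" where
  "nonzero_isolated w \<longleftrightarrow> (\<forall>i. Suc i < length w \<longrightarrow> w ! i = 0 \<or> w ! Suc i = 0)"

lemma nonzero_isolated_Nil [simp]: "nonzero_isolated []"
  and nonzero_isolated_singleton [simp]: "nonzero_isolated [x]"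
  by (simp_all add: nonzero_isolated_def)

lemma nonzero_isolated_Cons_Cons [simp]:
  "nonzero_isolated (x # y # w) \<longleftrightarrow> (x = 0 \<or> y = 0) \<and> nonzero_isolated (y # w)"
  unfolding nonzero_isolated_def by (auto simp: less_Suc_eq_0_disj)

lemma nonzero_isolated_Cons_0 [simp]: "nonzero_isolated (0 # w) \<longleftrightarrow> nonzero_isolated w"
  by (cases w) simp_all

lemma words_eq: "words m L j = {w. length w = L \<and> set w \<subseteq> {0..m} \<and> count_list w 1 = j \<and> nonzero_isolated w}"
  by (simp add: words_def nonzero_isolated_def)

lemma finite_words: "finite (words m L j)"
proof (rule finite_subset)
  show "words m L j \<subseteq> {w. set w \<subseteq> {0..m} \<and> length w = L}"
    by (auto simp: words_def)
qed (simp add: finite_lists_length_eq)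

lemma words_Suc_Suc:
  assumes "m \<ge> 1"
  shows "words m (Suc (Suc L)) j =
    Cons 0 ` words m (Suc L) j
    \<union> (\<lambda>(x, w). x # 0 # w) ` ({2..m} \<times> words m L j)
    \<union> (case j of 0 \<Rightarrow> {} | Suc i \<Rightarrow> (\<lambda>w. 1 # 0 # w) ` words m L i)"
    (is "_ = ?A \<union> ?B \<union> ?C")
proof (intro equalityI subsetI)
  fix w
  assume w: "w \<in> words m (Suc (Suc L)) j"
  then obtain x y t where xyt: "w = x # y # t"
    by (auto simp: words_eq length_Suc_conv)
  consider "x = 0" | "x = 1" | "x \<in> {2..m}"
    using w xyt by (force simp: words_eq)
  then show "w \<in> ?A \<union> ?B \<union> ?C"
  proof cases
    case 1
    then show ?thesis
      using w xyt by (auto simp: words_eq)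
  next
    case 2
    then show ?thesis
      using w xyt by (cases j) (auto simp: words_eq)
  next
    case 3
    then have "y = 0" "t \<in> words m L j"
      using w xyt by (auto simp: words_eq)
    with 3 xyt show ?thesis
      by force
  qed
next
  fix w
  assume "w \<in> ?A \<union> ?B \<union> ?C"
  then consider v where "w = 0 # v" "v \<in> words m (Suc L) j"
    | x v where "w = x # 0 # v" "x \<in> {2..m}" "v \<in> words m L j"
    | i v where "j = Suc i" "w = 1 # 0 # v" "v \<in> words m L i"
    by (auto split: nat.splits)
  then show "w \<in> words m (Suc (Suc L)) j"
    by cases (use assms in \<open>auto simp: words_eq\<close>)
qed

lemma card_words_Suc_Suc:
  assumes "m \<ge> 1"
  shows "card (words m (Suc (Suc L)) j) = card (words m (Suc L) j) + (m - 1) * card (words m L j)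
    + (case j of 0 \<Rightarrow> 0 | Suc i \<Rightarrow> card (words m L i))"
proof -
  let ?A = "Cons 0 ` words m (Suc L) j"
    and ?B = "(\<lambda>(x, w). x # 0 # w) ` ({2..m} \<times> words m L j)"
    and ?C = "\<lambda>i. (\<lambda>w. 1 # 0 # w) ` words m L i"
  have card_A: "card ?A = card (words m (Suc L) j)"
    by (rule card_image) simp
  have card_B: "card ?B = (m - 1) * card (words m L j)"
    by (subst card_image) (auto simp: inj_on_def card_cartesian_product)
  have card_C: "card (?C i) = card (words m L i)" for i
    by (rule card_image) (simp add: inj_on_def)
  have card_AB: "card (?A \<union> ?B) = card ?A + card ?B"
    by (rule card_Un_disjoint) (auto simp: finite_words)
  have "card (?A \<union> ?B \<union> ?C i) = card (?A \<union> ?B) + card (?C i)" for i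
    by (rule card_Un_disjoint) (auto simp: finite_words)
  with card_AB show ?thesis
    unfolding words_Suc_Suc[OF assms] card_A card_B card_C
    by (cases j) (simp_all add: card_C)
qed

lemma card_words_0: "card (words m 0 j) = (if j = 0 then 1 else 0)"
proof -
  have "words m 0 j = (if j = 0 then {[]} else {})"
    by (auto simp: words_def)
  then show ?thesis
    by simp
qed

lemma card_words_1:
  assumes "m \<ge> 1"
  shows "card (words m (Suc 0) j) = (if j = 0 then m else if j = 1 then 1 else 0)"
proof -
  have "words m (Suc 0) j = (\<lambda>x. [x]) ` {x \<in> {0..m}. (if x = 1 then 1 else 0) = j}"
    by (auto simp: words_def length_Suc_conv)
  then have "card (words m (Suc 0) j) = card {x \<in> {0..m}. (if x = 1 then 1 else 0) = j}"
    by (simp add: card_image inj_on_def)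
  also have "{x \<in> {0..m}. (if x = 1 then 1 else 0) = j} = (if j = 0 then {0..m} - {1} else if j = 1 then {1} else {})"
    using assms by auto
  finally show ?thesis
    using assms by simp
qed

lemma card_words_eq_cc:
  assumes "m \<ge> 1"
  shows "card (words m L j) = cc (f (m - 1)) (L + 3) (Suc j)"
proof (induction L arbitrary: j rule: induct_nat_012)
  case 0
  have "cc (f (m - 1)) 3 (Suc 0) = 1"
    using cc_f_closed_form[of "m - 1" 0 1] by (simp add: numeral_3_eq_3)
  then show ?case
    by (cases j) (simp_all add: card_words_0 cc_f_eq_0)
next
  case 1
  have "cc (f (m - 1)) 4 (Suc 0) = m"
    using cc_f_closed_form[of "m - 1" 0 2] closed_form_rec[of "m - 1" 0 0] assms by (simp add: numeral_eq_Suc)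
  moreover have "cc (f (m - 1)) 4 (Suc (Suc 0)) = 1"
    using cc_f_closed_form[of "m - 1" 1 0] by (simp add: numeral_eq_Suc)
  ultimately show ?case
    using assms by (auto simp: card_words_1 cc_f_eq_0 nat_neq_iff)
next
  case (ge2 L)
  have "cc (f (m - 1)) (L + 3 + 2) (Suc j) = cc (f (m - 1)) (L + 3 + 1) (Suc j)
      + (m - 1) * cc (f (m - 1)) (L + 3) (Suc j) + cc (f (m - 1)) (L + 3) j"
    by (rule cc_f_rec)
  with ge2 show ?case
    by (cases j) (simp_all add: card_words_Suc_Suc[OF assms])
qed

lemma cc_f_eq_sum:
  assumes "1 \<le> k" and "k \<le> n div 2"
  shows "cc (f a) n k = (\<Sum>j = 0..n div 2 - k. a ^ j * ((j + k - 1) choose (k - 1)) * ((n - k - j - 1) choose (k + j - 1)))"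
proof -
  define p r where "p = k - 1" and "r = n - 2 * k"
  have k: "k = Suc p" and n: "n = 2 * p + 2 + r" and bound: "n div 2 - k = r div 2"
    using assms by (auto simp: p_def r_def)
  have "cc (f a) n k = closed_form a p r"
    unfolding k n by (rule cc_f_closed_form)
  also have "\<dots> = (\<Sum>j = 0..n div 2 - k. a ^ j * ((j + k - 1) choose (k - 1)) * ((n - k - j - 1) choose (k + j - 1)))"
    unfolding closed_form_def closed_form_term_def bound
    by (rule sum.cong) (auto simp: k n add.commute)
  finally show ?thesis .
qed

theorem corollary29:
  fixes m :: nat
  assumes "m \<ge> 1"
  shows "(\<forall>n k. n > 3 \<and> 1 \<le> k \<and> k \<le> n div 2 \<longrightarrow> c m n k = card (words m (n - 3) (k - 1)))
    \<and> (\<forall>n k. 1 \<le> k \<and> k \<le> n div 2 \<longrightarrow>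
         c m n k = (\<Sum>j = 0..n div 2 - k. (m - 1) ^ j * ((j + k - 1) choose (k - 1)) * ((n - k - j - 1) choose (k + j - 1))))
    \<and> (\<forall>n k. n div 2 < k \<and> k \<le> n \<longrightarrow> c m n k = 0)"
proof (intro conjI allI impI)
  fix n k :: nat
  assume "3 < n \<and> 1 \<le> k \<and> k \<le> n div 2"
  then show "c m n k = card (words m (n - 3) (k - 1))"
    using card_words_eq_cc[OF assms, of "n - 3" "k - 1"] by (simp add: c_def)
next
  fix n k :: nat
  assume "1 \<le> k \<and> k \<le> n div 2"
  then show "c m n k = (\<Sum>j = 0..n div 2 - k. (m - 1) ^ j * ((j + k - 1) choose (k - 1)) * ((n - k - j - 1) choose (k + j - 1)))"
    by (simp add: c_def cc_f_eq_sum)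
next
  fix n k :: nat
  assume "n div 2 < k \<and> k \<le> n"
  then have "n < 2 * k"
    by linarith
  then show "c m n k = 0"
    by (simp add: c_def cc_f_eq_0)
qed

end
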